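(* Let $1\le s<n$ and $0<m<\binom{n}{s}$, and let $m=\sum_{k=0}^{\ell-1}\binom{n_{s-k}}{s-k}$ be the $s$-cascade representation of $m$. Then the $(n-s)$-cascade representation of $m'=\binom{n}{s}-m$ is $m'=\sum_{j=0}^{k-1}\binom{n'_{n-s-j}}{n-s-j}$ where $n_{s-\ell+1}=n'_{n-s-k+1}$ and, writing $b$ for this common value, \[\{b,n_{s-\ell+2},\dots,n_s\}\cup\{b,n'_{n-s-k+2},\dots,n'_{n-s}\}=\{b,b+1,\dots,n-1\},\] \[\{b,n_{s-\ell+2},\dots,n_s\}\cap\{b,n'_{n-s-k+2},\dots,n'_{n-s}\}=\{b\}.\] In particular $k+\ell-1=n-b$, i.e. $k=n-\ell-b+1$.
   Context: A strict $q$-cascade is an integer sequence $n_q>n_{q-1}>\dots>n_{q-\ell+1}$ with $0\le\ell\le q$ and $n_{q-j}\ge q-j$ for all $j$. Every integer $m\ge 0$ can be written uniquely as $m=\sum_{j=0}^{\ell-1}\binom{n_{q-j}}{q-j}$ with a strict $q$-cascade; this is the $q$-cascade representation of $m$, of length $\ell$. *)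

theory Defs
  imports Main
begin

text \<open>A strict q-cascade n_q > n_{q-1} > ... > n_{q-l+1} is represented by the list
  [n_q, n_{q-1}, ..., n_{q-l+1}] (so the entry at position j is n_{q-j}).\<close>

definition strict_cascade :: "nat \<Rightarrow> nat list \<Rightarrow> bool" where
  "strict_cascade q ns \<longleftrightarrow>
     length ns \<le> q \<and> sorted_wrt (>) ns \<and> (\<forall>j<length ns. q - j \<le> ns ! j)"

definition cascade_val :: "nat \<Rightarrow> nat list \<Rightarrow> nat" where
  "cascade_val q ns = (\<Sum>j<length ns. (ns ! j) choose (q - j))"

end

theory Submission
  imports Defs
begin

text \<open>Let \<open>p + q = N + 1\<close> and let \<open>m\<close> and \<open>m' = C(N+1, p) - m\<close> have nonempty \<open>p\<close>- and
  \<open>q\<close>-cascades with leading entries \<open>a\<close> and \<open>b\<close>. A \<open>p\<close>-cascade with leading entry \<open>a\<close> has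
  value in \<open>[C(a, p), C(a+1, p))\<close>, and \<open>C(N+1, p) = C(N, p) + C(N, q)\<close>; hence \<open>a, b \<le> N\<close>, and
  \<open>a < N\<close> forces \<open>m' > C(N, q)\<close>, i.e. \<open>b = N\<close>. So one cascade, say the first, starts with \<open>N\<close>,
  and dropping that entry leaves a \<open>(p-1)\<close>-cascade and the \<open>q\<close>-cascade whose values again add
  up to \<open>C(N, p-1) = C(N, q)\<close>. By induction on \<open>N\<close>, the entries of the two cascades fill the
  interval from their common last entry up to \<open>N\<close> and share only that last entry.\<close>

lemma strict_cascade_Cons:
  "strict_cascade q (a # xs) \<longleftrightarrow>
     1 \<le> q \<and> q \<le> a \<and> strict_cascade (q - 1) xs \<and> (\<forall>x\<in>set xs. x < a)"
proof -
  have "(\<forall>j<Suc (length xs). q - j \<le> (a # xs) ! j) \<longleftrightarrow>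
        q \<le> a \<and> (\<forall>j<length xs. q - 1 - j \<le> xs ! j)"
    by (simp only: All_less_Suc2 nth_Cons_0 nth_Cons_Suc diff_Suc_eq_diff_pred minus_nat.diff_0)
  then show ?thesis
    by (auto simp: strict_cascade_def)
qed

lemma cascade_val_Nil [simp]: "cascade_val q [] = 0"
  by (simp add: cascade_val_def)

lemma cascade_val_Cons [simp]:
  "cascade_val q (a # xs) = (a choose q) + cascade_val (q - 1) xs"
  unfolding cascade_val_def length_Cons sum.lessThan_Suc_shift
  by (simp only: nth_Cons_0 nth_Cons_Suc diff_Suc_eq_diff_pred minus_nat.diff_0)

lemma binomial_Suc_pred: "0 < q \<Longrightarrow> Suc a choose q = (a choose q) + (a choose (q - 1))"
  by (cases q) auto

lemma binomial_pred_complement: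
  assumes "p + q = Suc N" and "0 < p"
  shows "N choose (p - 1) = N choose q"
proof -
  have "N - (p - 1) = q" and "p - 1 \<le> N"
    using assms by auto
  then show ?thesis
    by (metis binomial_symmetric)
qed

lemma binomial_Suc_complement:
  "p + q = Suc N \<Longrightarrow> 0 < p \<Longrightarrow> Suc N choose p = (N choose p) + (N choose q)"
  using binomial_pred_complement by (simp add: binomial_Suc_pred)

lemma cascade_val_less_binomial:
  "strict_cascade q xs \<Longrightarrow> \<forall>x\<in>set xs. x < a \<Longrightarrow> q \<le> a \<Longrightarrow> cascade_val q xs < a choose q"
proof (induction xs arbitrary: q a)
  case Nil
  then show ?case by simp
next
  case (Cons b xs)
  then have "0 < q" "q \<le> b" "strict_cascade (q - 1) xs" "\<forall>x\<in>set xs. x < b" "b < a"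
    by (auto simp: strict_cascade_Cons)
  then have "cascade_val q (b # xs) < (b choose q) + (b choose (q - 1))"
    using Cons.IH by simp
  also have "\<dots> = Suc b choose q"
    using \<open>0 < q\<close> by (simp add: binomial_Suc_pred)
  also have "\<dots> \<le> a choose q"
    using \<open>b < a\<close> by (simp add: binomial_right_mono)
  finally show ?case .
qed

lemma binomial_le_cascade_val_iff:
  assumes "strict_cascade q (a # xs)"
  shows "c choose q \<le> cascade_val q (a # xs) \<longleftrightarrow> c \<le> a"
proof
  assume "c \<le> a"
  then show "c choose q \<le> cascade_val q (a # xs)"
    using binomial_right_mono[of c a q] by simp
next
  from assms have "0 < q" "q \<le> a" "strict_cascade (q - 1) xs" "\<forall>x\<in>set xs. x < a"
    by (auto simp: strict_cascade_Cons)
  then have "cascade_val q (a # xs) < Suc a choose q"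
    using cascade_val_less_binomial[of "q - 1" xs a] by (simp add: binomial_Suc_pred)
  moreover assume "c choose q \<le> cascade_val q (a # xs)"
  ultimately show "c \<le> a"
    using binomial_right_mono[of "Suc a" c q] by (meson not_less_eq_eq order.trans not_le)
qed

lemma cascade_val_eq_0_iff:
  assumes "strict_cascade q xs"
  shows "cascade_val q xs = 0 \<longleftrightarrow> xs = []"
proof (cases xs)
  case (Cons a ys)
  then have "0 < a choose q"
    using assms by (simp add: strict_cascade_Cons)
  then show ?thesis
    using Cons by simp
qed simp

lemma cascade_val_eq_binomial_iff:
  assumes "strict_cascade q xs" and "q \<le> N"
  shows "cascade_val q xs = N choose q \<longleftrightarrow> xs = [N]"
proof
  assume val: "cascade_val q xs = N choose q"
  then obtain b ys where xs: "xs = b # ys"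
    using assms by (cases xs) auto
  then have "0 < q"
    using assms(1) by (simp add: strict_cascade_Cons)
  have "N choose q < Suc N choose q"
    using \<open>0 < q\<close> \<open>q \<le> N\<close> by (simp add: binomial_Suc_pred)
  then have "b = N"
    using binomial_le_cascade_val_iff[OF assms(1)[unfolded xs]] val xs
    by (metis le_antisym not_less_eq_eq order.refl not_le)
  then have "cascade_val (q - 1) ys = 0"
    using val xs by simp
  then show "xs = [N]"
    using assms(1) xs \<open>b = N\<close> cascade_val_eq_0_iff by (simp add: strict_cascade_Cons)
qed simp

definition dual_cascades :: "nat \<Rightarrow> nat \<Rightarrow> nat \<Rightarrow> nat list \<Rightarrow> nat list \<Rightarrow> bool" where
  "dual_cascades n p q xs ys \<longleftrightarrow> 0 < p \<and> 0 < q \<and> p + q = n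
     \<and> strict_cascade p xs \<and> strict_cascade q ys \<and> xs \<noteq> [] \<and> ys \<noteq> []
     \<and> cascade_val p xs + cascade_val q ys = n choose p"

definition cascades_tile :: "nat \<Rightarrow> nat list \<Rightarrow> nat list \<Rightarrow> bool" where
  "cascades_tile n xs ys \<longleftrightarrow> xs \<noteq> [] \<and> ys \<noteq> [] \<and> last xs = last ys
     \<and> set xs \<union> set ys = {last xs..<n}
     \<and> set xs \<inter> set ys = {last xs}
     \<and> length ys + length xs - 1 = n - last xs"

lemma dual_cascades_sym: "dual_cascades n p q xs ys \<Longrightarrow> dual_cascades n q p ys xs"
  unfolding dual_cascades_def
  by (metis add.commute add_diff_cancel_left' binomial_symmetric le_add1)

lemma dual_cascades_hd:
  assumes "dual_cascades (Suc N) p q xs ys"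
  shows "hd xs = N \<or> hd ys = N"
proof -
  have bounded: "hd zs \<le> N" if "dual_cascades (Suc N) r t zs ws" for r t zs ws
  proof -
    from that have sc: "strict_cascade r zs" "strict_cascade t ws" "zs \<noteq> []" "ws \<noteq> []"
      and sum: "cascade_val r zs + cascade_val t ws = Suc N choose r"
      by (auto simp: dual_cascades_def)
    then have "cascade_val r zs < Suc N choose r"
      using cascade_val_eq_0_iff[OF sc(2)] by simp
    moreover obtain c us where "zs = c # us"
      using sc(3) by (cases zs) auto
    ultimately show ?thesis
      using binomial_le_cascade_val_iff[of r c us "Suc N"] sc(1) by auto
  qed
  obtain a us b vs where xs: "xs = a # us" and ys: "ys = b # vs"
    using assms by (cases xs; cases ys) (auto simp: dual_cascades_def)
  from assms have sc: "strict_cascade p (a # us)" "strict_cascade q (b # vs)" and "0 < p"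
    and sum: "cascade_val p xs + cascade_val q ys = (N choose p) + (N choose q)"
    by (auto simp: dual_cascades_def xs ys binomial_Suc_complement)
  have "N \<le> b" if "a < N"
  proof -
    have "cascade_val p xs < N choose p"
      using binomial_le_cascade_val_iff[OF sc(1), of N] that xs by simp
    then show ?thesis
      using binomial_le_cascade_val_iff[OF sc(2), of N] sum ys by simp
  qed
  then show ?thesis
    using bounded[OF assms] bounded[OF dual_cascades_sym[OF assms]] xs ys
    by (cases "a < N") auto
qed

lemma dual_cascades_Cons_sum:
  assumes "dual_cascades (Suc N) p q (N # xs) ys"
  shows "cascade_val (p - 1) xs + cascade_val q ys = N choose q"
  using assms by (auto simp: dual_cascades_def binomial_Suc_complement)

lemma dual_cascades_Cons_Nil:
  assumes "dual_cascades (Suc N) p q [N] ys"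
  shows "ys = [N]"
proof -
  from assms have "strict_cascade q ys" and "q \<le> N"
    by (auto simp: dual_cascades_def)
  then show ?thesis
    using dual_cascades_Cons_sum[OF assms] cascade_val_eq_binomial_iff by simp
qed

lemma dual_cascades_Cons:
  assumes "dual_cascades (Suc N) p q (N # xs) ys" and "xs \<noteq> []"
  shows "dual_cascades N (p - 1) q xs ys"
proof -
  from assms have "strict_cascade (p - 1) xs" and "0 < p" and "p + q = Suc N"
    by (auto simp: dual_cascades_def strict_cascade_Cons)
  moreover from this \<open>xs \<noteq> []\<close> have "0 < p - 1"
    by (cases xs) (auto simp: strict_cascade_Cons)
  moreover have "N choose (p - 1) = N choose q"
    using \<open>p + q = Suc N\<close> \<open>0 < p\<close> by (rule binomial_pred_complement)
  ultimately show ?thesis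
    using assms dual_cascades_Cons_sum[OF assms(1)] by (auto simp: dual_cascades_def)
qed

lemma cascades_tile_sym: "cascades_tile n xs ys \<Longrightarrow> cascades_tile n ys xs"
  unfolding cascades_tile_def by (metis inf_commute sup_commute add.commute)

lemma cascades_tile_single: "cascades_tile (Suc N) [N] [N]"
  by (simp add: cascades_tile_def)

lemma cascades_tile_Cons:
  assumes "cascades_tile N xs ys"
  shows "cascades_tile (Suc N) (N # xs) ys"
proof -
  from assms have "last xs \<in> {last xs..<N}"
    by (auto simp: cascades_tile_def)
  with assms show ?thesis
    by (auto simp: cascades_tile_def)
qed

lemma dual_cascades_tile: "dual_cascades n p q xs ys \<Longrightarrow> cascades_tile n xs ys"
proof (induction n arbitrary: p q xs ys)
  case 0
  then show ?case by (auto simp: dual_cascades_def)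
next
  case (Suc N)
  have leading: "cascades_tile (Suc N) xs ys"
    if dual: "dual_cascades (Suc N) p q xs ys" and "hd xs = N" for p q xs ys
  proof -
    obtain us where xs: "xs = N # us"
      using dual \<open>hd xs = N\<close> by (cases xs) (auto simp: dual_cascades_def)
    show ?thesis
    proof (cases "us = []")
      case True
      then have "ys = [N]"
        using dual_cascades_Cons_Nil dual xs by simp
      then show ?thesis
        using True xs cascades_tile_single by simp
    next
      case False
      with dual have "dual_cascades N (p - 1) q us ys"
        unfolding xs by (rule dual_cascades_Cons)
      then show ?thesis
        using xs by (simp add: Suc.IH cascades_tile_Cons)
    qed
  qed
  from dual_cascades_hd[OF Suc.prems] show ?case
    using leading[OF Suc.prems] leading[OF dual_cascades_sym[OF Suc.prems]] cascades_tile_sym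
    by blast
qed

theorem mainTheorem9:
  fixes n s m :: nat and ns ns' :: "nat list"
  assumes "1 \<le> s" and "s < n"
    and "0 < m" and "m < n choose s"
    and "strict_cascade s ns" and "cascade_val s ns = m"
    and "strict_cascade (n - s) ns'" and "cascade_val (n - s) ns' = (n choose s) - m"
  shows "ns \<noteq> [] \<and> ns' \<noteq> [] \<and> last ns = last ns'
    \<and> set ns \<union> set ns' = {last ns..<n}
    \<and> set ns \<inter> set ns' = {last ns}
    \<and> length ns' + length ns - 1 = n - last ns"
proof -
  have "ns \<noteq> []" and "ns' \<noteq> []"
    using assms cascade_val_eq_0_iff by auto
  with assms have "dual_cascades n s (n - s) ns ns'"
    by (simp add: dual_cascades_def)
  then show ?thesis
    using dual_cascades_tile by (simp add: cascades_tile_def)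
qed

end
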